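(* Assume $\mathrm{recc}(C)\subseteq\mathrm{recc}(P^B)$. Fix $k\in N_2$ and assume $N_0\not\subseteq J$. Then the projection of $Q'_k$ onto the $x$-variables equals $$\Big\{x\in\mathbb{R}^N_+:\sum_{i\in S}x_i-\sum_{j\in N\setminus J}\frac{x_j}{\varepsilon'_j(S)}\le0\ \ \forall S\subseteq M'\Big\}.$$
   Context: Let $A\in\mathbb{R}^{m\times n}$ have full row rank, $b\in\mathbb{R}^m$, and $P=\{x\in\mathbb{R}^n_+:Ax=b\}$. Let $C\subseteq\mathbb{R}^n$ be an open convex set. Fix a basis $B$ of $P$ with nonbasic set $N=\{1,\dots,n\}\setminus B$. Write $P=\{x:x_i=\bar b_i-\sum_{j\in N}\bar a_{ij}x_j\ (i\in B),\ x\ge0\}$ with $\bar b\ge0$. The basic solution $\bar x$ has $\bar x_i=\bar b_i$ ($i\in B$) and $0$ ($i\in N$). $P^B$ is obtained by dropping $x_i\ge0$ for $i\in B$. For $j\in N$, $\bar r^j$ has $\bar r^j_k=-\bar a_{kj}$ ($k\in B$), $\bar r^j_j=1$, and $0$ otherwise. Thus $P^B=\{\bar x+\sum_{j\in N}x_j\bar r^j:x_j\ge0\}$. It is assumed that $\bar x\notin\mathrm{cl}(C)$. For $j\in N$, $\alpha_j=\inf\{\lambda\ge0:\bar x+\lambda\bar r^j\in C\}$ and $\beta_j=\sup\{\lambda\ge0:\bar x+\lambda\bar r^j\in C\}$, with $\alpha_j=+\infty$, $\beta_j=-\infty$ if the halfline misses $C$. Define - $N_0=\{j:\alpha_j=+\infty,\beta_j=-\infty\}$;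 - $N_2=\{j:\alpha_j\in(0,\infty),\beta_j\in(\alpha_j,\infty)\}$. For a set $K$, $\mathrm{recc}(K)=\{d:x+\lambda d\in K\ \forall x\in K,\lambda\ge0\}$. We use the convention $t/+\infty=0$. For $k\in N_2$, $S_k^C=\{\bar x\}+\mathrm{conv}\big(\bigcup_{j\in N_2}\{\lambda\bar r^j:0\le\lambda<\beta_j\}\big)+\{\lambda\bar r^k:\lambda\le0\}+\mathrm{recc}(C)$. Let $J=\{i\in N:\bar r^i\in\mathrm{recc}(S_k^C)\}$. For $i\in J$, $j\in N\setminus J$, $\gamma'_{ij}=\sup\{\gamma\ge0:\bar r^i+\gamma\bar r^j\in\mathrm{recc}(S_k^C)\}$. Let $M'=\{i\in J:\gamma'_{ij}>0\ \forall j\in N\setminus J\}$. For $S\subseteq M'$, $\varepsilon'_j(S)=\min_{i\in S}\gamma'_{ij}$ if $S\neq\emptyset$, and $+\infty$ otherwise. Extended formulation. Let $m_1=|M'|$. For each $j\in N\setminus J$ let $\pi_j:\{1,\dots,m_1\}\to M'$ be a bijection with $\gamma'_{\pi_j(1),j}\le\dots\le\gamma'_{\pi_j(m_1),j}$, and let $\ell_j=\pi_j^{-1}$. Set $1/\gamma'_{\pi_j(m_1+1),j}:=0$ (and $1/\gamma'_{\pi_j(1),j}:=0$ if $m_1=0$), and $v_{m_1+1,j}:=0$. $Q'_k$ is the set of $(x,\theta,v,\lambda)$ with $x\in\mathbb{R}^N_+$, $\theta=(\theta_{ij})\ge0$ and $v=(v_{ij})\ge0$ indexed by $i\in\{1,\dots,m_1\}$,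 $j\in N\setminus J$, and $\lambda\in\mathbb{R}^{N\setminus J}$ free, satisfying: 1. $\sum_{i=1}^{m_1}\sum_{j\in N\setminus J}\theta_{ij}+\sum_{j\in N\setminus J}\lambda_j\le0$; 2. $\lambda_j-v_{1j}+x_j/\gamma'_{\pi_j(1),j}\ge0$ for all $j\in N\setminus J$; 3. $\theta_{ij}+v_{ij}-v_{i+1,j}+\big(1/\gamma'_{\pi_j(i+1),j}-1/\gamma'_{\pi_j(i),j}\big)x_j\ge0$ for all $i=1,\dots,m_1$ and $j\in N\setminus J$; 4. $\sum_{j\in N\setminus J}\theta_{\ell_j(i),j}-x_i\ge0$ for all $i\in M'$. *)

theory Defs
  imports "HOL-Analysis.Analysis" "HOL-Library.FuncSet"
begin

(* Points of R^n are real^'n; A :: real^'n^'m is the m x n constraint matrix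
   (rows indexed by 'm), b :: real^'m.  B :: 'n set is the basis, N = -B the
   nonbasic set. *)

definition recc :: "'a::real_vector set \<Rightarrow> 'a set" where
  "recc K = {d. \<forall>x\<in>K. \<forall>l::real. 0 \<le> l \<longrightarrow> x + l *\<^sub>R d \<in> K}"

definition basic_sol :: "real^'n^'m \<Rightarrow> real^'m \<Rightarrow> 'n set \<Rightarrow> real^'n" where
  "basic_sol A b B = (THE x. A *v x = b \<and> (\<forall>j. j \<notin> B \<longrightarrow> x $ j = 0))"

(* rbar^j: r_j = 1, r_l = 0 for other nonbasic l, and r_k = -abar_kj for k in B,
   i.e. the unique r with A r = 0 and these nonbasic entries *)
definition ray :: "real^'n^'m \<Rightarrow> 'n set \<Rightarrow> 'n \<Rightarrow> real^'n" where
  "ray A B j = (THE r. A *v r = 0 \<and> r $ j = 1 \<and> (\<forall>l. l \<notin> B \<and> l \<noteq> j \<longrightarrow> r $ l = 0))"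

definition is_feasible_basis :: "real^'n^'m \<Rightarrow> real^'m \<Rightarrow> 'n set \<Rightarrow> bool" where
  "is_feasible_basis A b B \<longleftrightarrow>
     card B = CARD('m) \<and> inj_on (\<lambda>j. column j A) B \<and>
     independent ((\<lambda>j. column j A) ` B) \<and>
     (\<forall>i\<in>B. 0 \<le> basic_sol A b B $ i)"

definition Pset :: "real^'n^'m \<Rightarrow> real^'m \<Rightarrow> (real^'n) set" where
  "Pset A b = {x. A *v x = b \<and> (\<forall>j. 0 \<le> x $ j)}"

definition PB :: "real^'n^'m \<Rightarrow> real^'m \<Rightarrow> 'n set \<Rightarrow> (real^'n) set" where
  "PB A b B = {x. A *v x = b \<and> (\<forall>j. j \<notin> B \<longrightarrow> 0 \<le> x $ j)}"

definition hits :: "real^'n^'m \<Rightarrow> real^'m \<Rightarrow> 'n set \<Rightarrow> (real^'n) set \<Rightarrow> 'n \<Rightarrow> real set" where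
  "hits A b B C j = {l. 0 \<le> l \<and> basic_sol A b B + l *\<^sub>R ray A B j \<in> C}"

(* inf/sup in the extended reals: Inf {} = +infinity, Sup {} = -infinity *)
definition alpha :: "real^'n^'m \<Rightarrow> real^'m \<Rightarrow> 'n set \<Rightarrow> (real^'n) set \<Rightarrow> 'n \<Rightarrow> ereal" where
  "alpha A b B C j = Inf (ereal ` hits A b B C j)"

definition beta :: "real^'n^'m \<Rightarrow> real^'m \<Rightarrow> 'n set \<Rightarrow> (real^'n) set \<Rightarrow> 'n \<Rightarrow> ereal" where
  "beta A b B C j = Sup (ereal ` hits A b B C j)"

definition N0 :: "real^'n^'m \<Rightarrow> real^'m \<Rightarrow> 'n set \<Rightarrow> (real^'n) set \<Rightarrow> 'n set" where
  "N0 A b B C = {j. j \<notin> B \<and> alpha A b B C j = \<infinity> \<and> beta A b B C j = -\<infinity>}"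

definition N2 :: "real^'n^'m \<Rightarrow> real^'m \<Rightarrow> 'n set \<Rightarrow> (real^'n) set \<Rightarrow> 'n set" where
  "N2 A b B C = {j. j \<notin> B \<and> 0 < alpha A b B C j \<and> alpha A b B C j < \<infinity>
                  \<and> alpha A b B C j < beta A b B C j \<and> beta A b B C j < \<infinity>}"

definition SkC :: "real^'n^'m \<Rightarrow> real^'m \<Rightarrow> 'n set \<Rightarrow> (real^'n) set \<Rightarrow> 'n \<Rightarrow> (real^'n) set" where
  "SkC A b B C k = {basic_sol A b B + u + l *\<^sub>R ray A B k + w | u l w.
      u \<in> convex hull (\<Union>j\<in>N2 A b B C. {t *\<^sub>R ray A B j | t. 0 \<le> t \<and> ereal t < beta A b B C j})
      \<and> l \<le> 0 \<and> w \<in> recc C}"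

definition Jset :: "real^'n^'m \<Rightarrow> real^'m \<Rightarrow> 'n set \<Rightarrow> (real^'n) set \<Rightarrow> 'n \<Rightarrow> 'n set" where
  "Jset A b B C k = {i. i \<notin> B \<and> ray A B i \<in> recc (SkC A b B C k)}"

definition gam :: "real^'n^'m \<Rightarrow> real^'m \<Rightarrow> 'n set \<Rightarrow> (real^'n) set \<Rightarrow> 'n \<Rightarrow> 'n \<Rightarrow> 'n \<Rightarrow> ereal" where
  "gam A b B C k i j = Sup (ereal ` {g. 0 \<le> g \<and> ray A B i + g *\<^sub>R ray A B j \<in> recc (SkC A b B C k)})"

definition Mset :: "real^'n^'m \<Rightarrow> real^'m \<Rightarrow> 'n set \<Rightarrow> (real^'n) set \<Rightarrow> 'n \<Rightarrow> 'n set" where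
  "Mset A b B C k = {i \<in> Jset A b B C k. \<forall>j. j \<notin> B \<and> j \<notin> Jset A b B C k \<longrightarrow> 0 < gam A b B C k i j}"

definition eps :: "real^'n^'m \<Rightarrow> real^'m \<Rightarrow> 'n set \<Rightarrow> (real^'n) set \<Rightarrow> 'n \<Rightarrow> 'n \<Rightarrow> 'n set \<Rightarrow> ereal" where
  "eps A b B C k j S = (if S = {} then \<infinity> else Min ((\<lambda>i. gam A b B C k i j) ` S))"

definition einv :: "ereal \<Rightarrow> real" where
  "einv g = (if g = \<infinity> then 0 else 1 / real_of_ereal g)"

definition sorted_perms :: "real^'n^'m \<Rightarrow> real^'m \<Rightarrow> 'n set \<Rightarrow> (real^'n) set \<Rightarrow> 'n \<Rightarrow> ('n \<Rightarrow> nat \<Rightarrow> 'n) \<Rightarrow> bool" where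
  "sorted_perms A b B C k \<pi> \<longleftrightarrow>
     (\<forall>j. j \<notin> B \<and> j \<notin> Jset A b B C k \<longrightarrow>
        bij_betw (\<pi> j) {1..card (Mset A b B C k)} (Mset A b B C k) \<and>
        (\<forall>p q. 1 \<le> p \<and> p \<le> q \<and> q \<le> card (Mset A b B C k) \<longrightarrow>
            gam A b B C k (\<pi> j p) j \<le> gam A b B C k (\<pi> j q) j))"

(* Q'_k: tuples (x, theta, v, lambda); x in R^N_+ encoded as x \<in> N \<rightarrow>\<^sub>E {0..};
   theta, v indexed by i in {1..m1}, j in N\J; lambda indexed by j in N\J. *)
definition Qk :: "real^'n^'m \<Rightarrow> real^'m \<Rightarrow> 'n set \<Rightarrow> (real^'n) set \<Rightarrow> 'n \<Rightarrow> ('n \<Rightarrow> nat \<Rightarrow> 'n)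
     \<Rightarrow> (('n \<Rightarrow> real) \<times> (nat \<Rightarrow> 'n \<Rightarrow> real) \<times> (nat \<Rightarrow> 'n \<Rightarrow> real) \<times> ('n \<Rightarrow> real)) set" where
  "Qk A b B C k \<pi> =
    (let N = - B; J = Jset A b B C k; NJ = N - J; M = Mset A b B C k; m1 = card M;
         g = (\<lambda>j i. if i \<in> {1..m1} then einv (gam A b B C k (\<pi> j i) j) else 0);
         ell = (\<lambda>j i. inv_into {1..m1} (\<pi> j) i)
     in {(x, \<theta>, v, lam). 
          let vv = (\<lambda>i j. if i \<in> {1..m1} then v i j else 0) in
          x \<in> N \<rightarrow>\<^sub>E {0..} \<and>
          (\<forall>i\<in>{1..m1}. \<forall>j\<in>NJ. 0 \<le> \<theta> i j \<and> 0 \<le> v i j) \<and>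
          (\<Sum>i\<in>{1..m1}. \<Sum>j\<in>NJ. \<theta> i j) + (\<Sum>j\<in>NJ. lam j) \<le> 0 \<and>
          (\<forall>j\<in>NJ. 0 \<le> lam j - vv 1 j + x j * g j 1) \<and>
          (\<forall>i\<in>{1..m1}. \<forall>j\<in>NJ. 0 \<le> \<theta> i j + vv i j - vv (i + 1) j + (g j (i + 1) - g j i) * x j) \<and>
          (\<forall>i\<in>M. 0 \<le> (\<Sum>j\<in>NJ. \<theta> (ell j i) j) - x i)})"

end

theory Submission
  imports Defs
begin

(* Read the block (j, p), for j in N \ J and 1 <= p <= m1, as a supplier of
   x_j (1/gamma'_{pi_j(p),j} - 1/gamma'_{pi_j(p+1),j}) that serves the first p elements of M' in
   the order pi_j.  Constraints 2 and 3 telescope to the tail bounds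
   sum_{q >= p} theta_{qj} <= x_j / gamma'_{pi_j(p),j}, so theta is a flow in this network meeting
   the demands x_i (i in M') of constraint 4.  The blocks adjacent to S have total supply
   sum_j x_j / eps'_j(S), hence the inequalities of the theorem are exactly Hall's condition for the
   network, and Gale's supply-demand theorem turns them back into a flow. *)

section \<open>Gale's supply-demand theorem\<close>

definition neighbours :: "'k set \<Rightarrow> ('k \<Rightarrow> 'd \<Rightarrow> bool) \<Rightarrow> 'd set \<Rightarrow> 'k set" where
  "neighbours K E S = {k \<in> K. \<exists>a\<in>S. E k a}"

definition hall_condition ::
    "'k set \<Rightarrow> 'd set \<Rightarrow> ('k \<Rightarrow> real) \<Rightarrow> ('d \<Rightarrow> real) \<Rightarrow> ('k \<Rightarrow> 'd \<Rightarrow> bool) \<Rightarrow> bool" where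
  "hall_condition K D w d E \<longleftrightarrow> (\<forall>S\<subseteq>D. sum d S \<le> sum w (neighbours K E S))"

definition transport_flow :: "'k set \<Rightarrow> 'd set \<Rightarrow> ('k \<Rightarrow> real) \<Rightarrow> ('d \<Rightarrow> real)
    \<Rightarrow> ('k \<Rightarrow> 'd \<Rightarrow> bool) \<Rightarrow> ('k \<Rightarrow> 'd \<Rightarrow> real) \<Rightarrow> bool" where
  "transport_flow K D w d E f \<longleftrightarrow> (\<forall>k a. 0 \<le> f k a) \<and> (\<forall>k a. \<not> E k a \<longrightarrow> f k a = 0) \<and>
      (\<forall>k\<in>K. sum (f k) D \<le> w k) \<and> (\<forall>a\<in>D. (\<Sum>k\<in>K. f k a) = d a)"

lemma sum_if_notin:
  assumes "finite A"
  shows "(\<Sum>x\<in>A. if x \<in> B then 0 else g x) = sum g (A - B)"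
proof -
  have "(\<Sum>x\<in>A. if x \<in> B then 0 else g x) = (\<Sum>x\<in>A. if x \<in> - B then g x else 0)"
    by (rule sum.cong) auto
  also have "\<dots> = sum g (A - B)"
    using assms by (simp add: sum.inter_restrict Diff_eq)
  finally show ?thesis .
qed

lemma transport_flow_augment:
  assumes "transport_flow K D (\<lambda>k'. w k' - (if k' = k then t else 0))
      (\<lambda>a'. d a' - (if a' = a then t else 0)) E f"
    and "k \<in> K" "a \<in> D" "E k a" "0 \<le> t" "finite K" "finite D"
  shows "transport_flow K D w d E (\<lambda>k' a'. f k' a' + (if k' = k \<and> a' = a then t else 0))"
proof -
  have "(\<Sum>a'\<in>D. f k' a' + (if k' = k \<and> a' = a then t else 0))
      = sum (f k') D + (if k' = k then t else 0)" for k'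
    using assms by (simp add: sum.distrib)
  moreover have "(\<Sum>k'\<in>K. f k' a' + (if k' = k \<and> a' = a then t else 0))
      = (\<Sum>k'\<in>K. f k' a') + (if a' = a then t else 0)" for a'
    using assms by (simp add: sum.distrib)
  ultimately show ?thesis
    using assms unfolding transport_flow_def by auto
qed

lemma transport_flow_add_demand:
  assumes "transport_flow K (D - {a}) w d E f" "d a = 0" "a \<in> D" "finite D"
  shows "transport_flow K D w d E (\<lambda>k a'. if a' = a then 0 else f k a')"
proof -
  have "(\<Sum>a'\<in>D. if a' = a then 0 else f k a') = sum (f k) (D - {a})" for k
    using assms sum_if_notin[of D "{a}" "f k"] by simp
  moreover have "(\<Sum>k\<in>K. if a' = a then 0 else f k a') = d a'" if "a' \<in> D" for a'
    using assms that unfolding transport_flow_def by (cases "a' = a") auto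
  ultimately show ?thesis
    using assms unfolding transport_flow_def by auto
qed

lemma transport_flow_add_supply:
  assumes "transport_flow (K - {k}) D w d E f" "w k = 0" "k \<in> K" "finite K"
  shows "transport_flow K D w d E (\<lambda>k' a. if k' = k then 0 else f k' a)"
proof -
  have "(\<Sum>k'\<in>K. if k' = k then 0 else f k' a) = (\<Sum>k'\<in>K - {k}. f k' a)" for a
    using assms sum_if_notin[of K "{k}" "\<lambda>k'. f k' a"] by simp
  moreover have "(\<Sum>a\<in>D. if k' = k then 0 else f k' a) \<le> w k'" if "k' \<in> K" for k'
    using assms that unfolding transport_flow_def by (cases "k' = k") auto
  ultimately show ?thesis
    using assms unfolding transport_flow_def by auto
qed

lemma transport_flow_glue:
  assumes NS: "NS = neighbours K E S"
    and f1: "transport_flow NS S w d E f1" and f2: "transport_flow (K - NS) (D - S) w d E f2"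
    and "S \<subseteq> D" "finite K" "finite D"
  shows "transport_flow K D w d E
    (\<lambda>k a. if k \<in> NS then (if a \<in> S then f1 k a else 0) else (if a \<in> S then 0 else f2 k a))"
    (is "transport_flow K D w d E ?f")
proof -
  have "NS \<subseteq> K" "finite NS" using assms by (auto simp: neighbours_def)
  have row: "sum (?f k) D = (if k \<in> NS then sum (f1 k) S else sum (f2 k) (D - S))" for k
  proof -
    have "(\<Sum>a\<in>D. if a \<in> S then f1 k a else 0) = sum (f1 k) (D \<inter> S)"
      using \<open>finite D\<close> by (rule sum.inter_restrict[symmetric])
    moreover have "D \<inter> S = S" using \<open>S \<subseteq> D\<close> by blast
    moreover have "(\<Sum>a\<in>D. if a \<in> S then 0 else f2 k a) = sum (f2 k) (D - S)"
      using assms by (simp add: sum_if_notin)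
    ultimately show ?thesis by simp
  qed
  have column: "(\<Sum>k\<in>K. ?f k a) = (if a \<in> S then (\<Sum>k\<in>NS. f1 k a) else (\<Sum>k\<in>K - NS. f2 k a))" for a
  proof (cases "a \<in> S")
    case True
    then have "(\<Sum>k\<in>K. ?f k a) = (\<Sum>k\<in>K. if k \<in> NS then f1 k a else 0)"
      by (intro sum.cong) auto
    also have "\<dots> = (\<Sum>k\<in>K \<inter> NS. f1 k a)"
      using \<open>finite K\<close> by (rule sum.inter_restrict[symmetric])
    finally show ?thesis
      using True \<open>NS \<subseteq> K\<close> by (simp add: Int_absorb1)
  next
    case False
    then have "(\<Sum>k\<in>K. ?f k a) = (\<Sum>k\<in>K. if k \<in> NS then 0 else f2 k a)"
      by (intro sum.cong) auto
    then show ?thesis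
      using False \<open>finite K\<close> by (simp add: sum_if_notin)
  qed
  show ?thesis
    using f1 f2 unfolding transport_flow_def row column by (auto simp: NS neighbours_def)
qed

lemma hall_condition_subset:
  "hall_condition K D w d E \<Longrightarrow> D' \<subseteq> D \<Longrightarrow> hall_condition K D' w d E"
  unfolding hall_condition_def by blast

lemma hall_condition_remove_supply:
  assumes "hall_condition K D w d E" "w k = 0" "finite K"
  shows "hall_condition (K - {k}) D w d E"
  unfolding hall_condition_def
proof (intro allI impI)
  fix S assume "S \<subseteq> D"
  have "sum w (neighbours K E S) = sum w (neighbours K E S - {k})"
    using assms by (cases "k \<in> neighbours K E S") (simp_all add: sum.remove neighbours_def)
  also have "neighbours K E S - {k} = neighbours (K - {k}) E S"
    by (auto simp: neighbours_def)
  finally show "sum d S \<le> sum w (neighbours (K - {k}) E S)"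
    using assms \<open>S \<subseteq> D\<close> unfolding hall_condition_def by metis
qed

lemma hall_condition_neighbours:
  assumes "hall_condition K D w d E" "S \<subseteq> D"
  shows "hall_condition (neighbours K E S) S w d E"
proof -
  have "neighbours (neighbours K E S) E T = neighbours K E T" if "T \<subseteq> S" for T
    using that by (auto simp: neighbours_def)
  then show ?thesis
    using assms unfolding hall_condition_def by auto
qed

lemma hall_condition_tight_complement:
  assumes hall: "hall_condition K D w d E" and "S \<subseteq> D" "finite K" "finite D"
    and tight: "sum d S = sum w (neighbours K E S)"
  shows "hall_condition (K - neighbours K E S) (D - S) w d E"
  unfolding hall_condition_def
proof (intro allI impI)
  fix T assume T: "T \<subseteq> D - S"
  have "finite T" "finite S" using T assms by (auto intro: finite_subset)
  have "sum d T + sum d S = sum d (T \<union> S)"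
    using T \<open>finite T\<close> \<open>finite S\<close> by (subst sum.union_disjoint) auto
  also have "\<dots> \<le> sum w (neighbours K E (T \<union> S))"
    using hall T \<open>S \<subseteq> D\<close> unfolding hall_condition_def by blast
  also have "\<dots> = sum w (neighbours (K - neighbours K E S) E T) + sum w (neighbours K E S)"
  proof -
    have "neighbours (K - neighbours K E S) E T = neighbours K E (T \<union> S) - neighbours K E S"
      by (auto simp: neighbours_def)
    moreover have "neighbours K E S \<subseteq> neighbours K E (T \<union> S)"
      by (auto simp: neighbours_def)
    ultimately show ?thesis
      using \<open>finite K\<close> sum.subset_diff[of "neighbours K E S" "neighbours K E (T \<union> S)" w]
      by (simp add: neighbours_def)
  qed
  finally show "sum d T \<le> sum w (neighbours (K - neighbours K E S) E T)"
    using tight by linarith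
qed

lemma hall_condition_shift:
  assumes hall: "hall_condition K D w d E" and "finite K" "finite D" and "k \<in> K" "a \<in> D" "E k a"
    and t: "\<And>S. S \<subseteq> D \<Longrightarrow> a \<notin> S \<Longrightarrow> k \<in> neighbours K E S \<Longrightarrow>
      t \<le> sum w (neighbours K E S) - sum d S"
  shows "hall_condition K D (\<lambda>k'. w k' - (if k' = k then t else 0))
    (\<lambda>a'. d a' - (if a' = a then t else 0)) E"
  unfolding hall_condition_def
proof (intro allI impI)
  fix S assume S: "S \<subseteq> D"
  have "finite S" using S \<open>finite D\<close> finite_subset by blast
  then have demand_sum:
    "(\<Sum>a'\<in>S. d a' - (if a' = a then t else 0)) = sum d S - (if a \<in> S then t else 0)"
    by (simp add: sum_subtractf)
  have supply_sum: "(\<Sum>k'\<in>neighbours K E S. w k' - (if k' = k then t else 0))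
      = sum w (neighbours K E S) - (if k \<in> neighbours K E S then t else 0)"
    using \<open>finite K\<close> by (simp add: sum_subtractf neighbours_def)
  have "sum d S \<le> sum w (neighbours K E S)"
    using hall S unfolding hall_condition_def by blast
  moreover have "a \<in> S \<Longrightarrow> k \<in> neighbours K E S"
    using \<open>k \<in> K\<close> \<open>E k a\<close> by (auto simp: neighbours_def)
  ultimately show "(\<Sum>a'\<in>S. d a' - (if a' = a then t else 0))
      \<le> (\<Sum>k'\<in>neighbours K E S. w k' - (if k' = k then t else 0))"
    unfolding demand_sum supply_sum using t[OF S]
    by (cases "a \<in> S"; cases "k \<in> neighbours K E S") auto
qed

definition reducible_instance ::
    "'k set \<Rightarrow> 'd set \<Rightarrow> ('k \<Rightarrow> real) \<Rightarrow> ('d \<Rightarrow> real) \<Rightarrow> ('k \<Rightarrow> 'd \<Rightarrow> bool) \<Rightarrow> bool" where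
  "reducible_instance K D w d E \<longleftrightarrow> (\<exists>a\<in>D. d a = 0) \<or> (\<exists>k\<in>K. w k = 0) \<or>
      (\<exists>S\<subseteq>D. S \<noteq> {} \<and> S \<noteq> D \<and> sum d S = sum w (neighbours K E S))"

lemma gale_reduce:
  assumes IH: "\<And>K' D'. card K' + card D' < card K + card D \<Longrightarrow> finite K' \<Longrightarrow> finite D' \<Longrightarrow>
      \<forall>k\<in>K'. 0 \<le> w k \<Longrightarrow> \<forall>a\<in>D'. 0 \<le> d a \<Longrightarrow> hall_condition K' D' w d E \<Longrightarrow>
      \<exists>f. transport_flow K' D' w d E f"
    and fin: "finite K" "finite D" and nonneg: "\<forall>k\<in>K. 0 \<le> w k" "\<forall>a\<in>D. 0 \<le> d a"
    and hall: "hall_condition K D w d E" and "reducible_instance K D w d E"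
  shows "\<exists>f. transport_flow K D w d E f"
  using \<open>reducible_instance K D w d E\<close> unfolding reducible_instance_def
proof (elim disjE bexE exE conjE)
  fix a assume "a \<in> D" "d a = 0"
  obtain f where f: "transport_flow K (D - {a}) w d E f"
    using \<open>a \<in> D\<close> fin nonneg hall_condition_subset[OF hall] card_Diff1_less[OF fin(2) \<open>a \<in> D\<close>]
      IH[of K "D - {a}"] by auto
  show ?thesis
    by (rule exI, rule transport_flow_add_demand[OF f \<open>d a = 0\<close> \<open>a \<in> D\<close> fin(2)])
next
  fix k assume "k \<in> K" "w k = 0"
  obtain f where f: "transport_flow (K - {k}) D w d E f"
    using \<open>k \<in> K\<close> fin nonneg hall_condition_remove_supply[OF hall \<open>w k = 0\<close> fin(1)]
      card_Diff1_less[OF fin(1) \<open>k \<in> K\<close>] IH[of "K - {k}" D] by auto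
  show ?thesis
    by (rule exI, rule transport_flow_add_supply[OF f \<open>w k = 0\<close> \<open>k \<in> K\<close> fin(1)])
next
  fix S assume S: "S \<subseteq> D" "S \<noteq> {}" "S \<noteq> D" and tight: "sum d S = sum w (neighbours K E S)"
  have "finite S" using S fin finite_subset by blast
  have sub: "neighbours K E S \<subseteq> K" by (auto simp: neighbours_def)
  have "card S < card D" "card (D - S) < card D"
    using S fin(2) by (auto intro: psubset_card_mono)
  moreover have "card (neighbours K E S) \<le> card K" "card (K - neighbours K E S) \<le> card K"
    using fin sub by (simp_all add: card_mono)
  ultimately have "card (neighbours K E S) + card S < card K + card D"
    "card (K - neighbours K E S) + card (D - S) < card K + card D"
    by linarith+
  moreover have "\<forall>k\<in>neighbours K E S. 0 \<le> w k" "\<forall>a\<in>S. 0 \<le> d a"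
    using nonneg sub S(1) by auto
  ultimately obtain f1 f2 where
    f1: "transport_flow (neighbours K E S) S w d E f1" and
    f2: "transport_flow (K - neighbours K E S) (D - S) w d E f2"
    using IH hall_condition_neighbours[OF hall S(1)]
      hall_condition_tight_complement[OF hall S(1) fin tight]
      fin \<open>finite S\<close> nonneg finite_subset[OF sub]
    by (metis Diff_iff finite_Diff)
  show ?thesis
    by (rule exI, rule transport_flow_glue[OF refl f1 f2 S(1) fin])
qed

lemma max_push_amount:
  assumes fin: "finite D" and hall: "hall_condition K D w d E"
    and "0 \<le> w k" "0 \<le> d a"
  obtains t where "0 \<le> t" "t \<le> w k" "t \<le> d a"
    "\<And>S. S \<subseteq> D \<Longrightarrow> a \<notin> S \<Longrightarrow> k \<in> neighbours K E S \<Longrightarrow>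
      t \<le> sum w (neighbours K E S) - sum d S"
    "t = d a \<or> t = w k \<or>
     (\<exists>S\<subseteq>D. a \<notin> S \<and> k \<in> neighbours K E S \<and> t = sum w (neighbours K E S) - sum d S)"
proof -
  let ?slack = "\<lambda>S. sum w (neighbours K E S) - sum d S"
  let ?cands = "{S. S \<subseteq> D \<and> a \<notin> S \<and> k \<in> neighbours K E S}"
  define t where "t = Min ({d a, w k} \<union> ?slack ` ?cands)"
  have "finite ?cands"
    by (rule finite_subset[of _ "Pow D"]) (use fin in auto)
  then have fin_all: "finite ({d a, w k} \<union> ?slack ` ?cands)"
    by simp
  have "t \<in> {d a, w k} \<union> ?slack ` ?cands"
    unfolding t_def using fin_all by (rule Min_in) simp
  then have t_cases: "t = d a \<or> t = w k \<or> (\<exists>S\<in>?cands. t = ?slack S)"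
    by blast
  have t_le: "t \<le> y" if "y \<in> {d a, w k} \<union> ?slack ` ?cands" for y
    unfolding t_def using fin_all that by (rule Min_le)
  have "0 \<le> ?slack S" if "S \<subseteq> D" for S
    using hall that unfolding hall_condition_def by auto
  then have "0 \<le> t"
    using t_cases \<open>0 \<le> w k\<close> \<open>0 \<le> d a\<close> by auto
  moreover have "\<And>S. S \<in> ?cands \<Longrightarrow> t \<le> ?slack S"
    using t_le by blast
  ultimately show ?thesis
    using t_le t_cases by (intro that) auto
qed

lemma push_along_edge:
  assumes fin: "finite K" "finite D" and hall: "hall_condition K D w d E"
    and "k \<in> K" "a \<in> D" "E k a" "0 \<le> w k" "0 \<le> d a"
  obtains t where "0 \<le> t" "t \<le> w k" "t \<le> d a"
    "hall_condition K D (\<lambda>k'. w k' - (if k' = k then t else 0))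
      (\<lambda>a'. d a' - (if a' = a then t else 0)) E"
    "reducible_instance K D (\<lambda>k'. w k' - (if k' = k then t else 0))
      (\<lambda>a'. d a' - (if a' = a then t else 0)) E"
proof -
  obtain t where "0 \<le> t" "t \<le> w k" "t \<le> d a"
    and t_slack: "\<And>S. S \<subseteq> D \<Longrightarrow> a \<notin> S \<Longrightarrow> k \<in> neighbours K E S \<Longrightarrow>
      t \<le> sum w (neighbours K E S) - sum d S"
    and t_cases: "t = d a \<or> t = w k \<or>
      (\<exists>S\<subseteq>D. a \<notin> S \<and> k \<in> neighbours K E S \<and> t = sum w (neighbours K E S) - sum d S)"
    using max_push_amount[OF fin(2) hall \<open>0 \<le> w k\<close> \<open>0 \<le> d a\<close>] by blast
  define w' where "w' = (\<lambda>k'. w k' - (if k' = k then t else 0))"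
  define d' where "d' = (\<lambda>a'. d a' - (if a' = a then t else 0))"
  have "hall_condition K D w' d' E"
    unfolding w'_def d'_def using hall fin \<open>k \<in> K\<close> \<open>a \<in> D\<close> \<open>E k a\<close> t_slack
    by (rule hall_condition_shift)
  moreover have "reducible_instance K D w' d' E"
    using t_cases
  proof (elim disjE exE conjE)
    assume "t = d a"
    then show ?thesis using \<open>a \<in> D\<close> by (auto simp: d'_def reducible_instance_def)
  next
    assume "t = w k"
    then show ?thesis using \<open>k \<in> K\<close> by (auto simp: w'_def reducible_instance_def)
  next
    fix S assume S: "S \<subseteq> D" "a \<notin> S" "k \<in> neighbours K E S"
      and t_eq: "t = sum w (neighbours K E S) - sum d S"
    have "sum d' S = sum d S"
      unfolding d'_def using S(2) by (intro sum.cong) auto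
    also have "\<dots> = sum w (neighbours K E S) - t"
      using t_eq by simp
    also have "\<dots> = sum w' (neighbours K E S)"
      unfolding w'_def using fin(1) S(3) by (simp add: sum_subtractf neighbours_def)
    finally have "sum d' S = sum w' (neighbours K E S)" .
    moreover have "S \<noteq> {}" "S \<noteq> D"
      using S \<open>a \<in> D\<close> by (auto simp: neighbours_def)
    ultimately show ?thesis
      unfolding reducible_instance_def using S(1) by blast
  qed
  ultimately show ?thesis
    using that \<open>0 \<le> t\<close> \<open>t \<le> w k\<close> \<open>t \<le> d a\<close> unfolding w'_def d'_def by blast
qed

theorem gale_supply_demand:
  "finite K \<Longrightarrow> finite D \<Longrightarrow> \<forall>k\<in>K. 0 \<le> w k \<Longrightarrow> \<forall>a\<in>D. 0 \<le> d a \<Longrightarrow>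
   hall_condition K D w d E \<Longrightarrow> \<exists>f. transport_flow K D w d E f"
proof (induction "card K + card D" arbitrary: K D w d rule: less_induct)
  case less
  note fin = less.prems(1,2) and nonneg = less.prems(3,4) and hall = less.prems(5)
  consider "D = {}" | "\<exists>a\<in>D. d a = 0" | a where "a \<in> D" "0 < d a"
    using nonneg by (metis all_not_in_conv order_le_less)
  then show ?case
  proof cases
    case 1
    then show ?thesis
      using nonneg by (intro exI[of _ "\<lambda>_ _. 0"]) (auto simp: transport_flow_def)
  next
    case 2
    then show ?thesis
      using fin nonneg hall
      by (intro gale_reduce[OF less.hyps]) (auto simp: reducible_instance_def)
  next
    case 3
    then have "sum d {a} \<le> sum w (neighbours K E {a})"
      using hall unfolding hall_condition_def by blast
    then have "neighbours K E {a} \<noteq> {}"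
      using \<open>0 < d a\<close> by auto
    then obtain k where "k \<in> K" "E k a"
      by (auto simp: neighbours_def)
    have "0 \<le> w k" "0 \<le> d a"
      using nonneg \<open>k \<in> K\<close> \<open>a \<in> D\<close> by auto
    obtain t where "0 \<le> t" "t \<le> w k" "t \<le> d a"
      and hall': "hall_condition K D (\<lambda>k'. w k' - (if k' = k then t else 0))
        (\<lambda>a'. d a' - (if a' = a then t else 0)) E"
      and reducible: "reducible_instance K D (\<lambda>k'. w k' - (if k' = k then t else 0))
        (\<lambda>a'. d a' - (if a' = a then t else 0)) E"
      by (rule push_along_edge[OF fin hall \<open>k \<in> K\<close> \<open>a \<in> D\<close> \<open>E k a\<close> \<open>0 \<le> w k\<close> \<open>0 \<le> d a\<close>])
    have "\<forall>k'\<in>K. 0 \<le> w k' - (if k' = k then t else 0)" "\<forall>a'\<in>D. 0 \<le> d a' - (if a' = a then t else 0)"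
      using nonneg \<open>t \<le> w k\<close> \<open>t \<le> d a\<close> by auto
    then obtain f where f: "transport_flow K D (\<lambda>k'. w k' - (if k' = k then t else 0))
        (\<lambda>a'. d a' - (if a' = a then t else 0)) E f"
      using gale_reduce[OF less.hyps fin _ _ hall' reducible] by blast
    show ?thesis
      by (rule exI, rule transport_flow_augment[OF f \<open>k \<in> K\<close> \<open>a \<in> D\<close> \<open>E k a\<close> \<open>0 \<le> t\<close> fin])
  qed
qed

section \<open>The projection of the extended formulation\<close>

definition min_gamma :: "('a \<Rightarrow> 'a \<Rightarrow> ereal) \<Rightarrow> 'a \<Rightarrow> 'a set \<Rightarrow> ereal" where
  "min_gamma gm j S = (if S = {} then \<infinity> else Min ((\<lambda>i. gm i j) ` S))"

definition inv_weight :: "('a \<Rightarrow> 'a \<Rightarrow> ereal) \<Rightarrow> ('a \<Rightarrow> nat \<Rightarrow> 'a) \<Rightarrow> nat \<Rightarrow> 'a \<Rightarrow> nat \<Rightarrow> real" where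
  "inv_weight gm \<pi> m j i = (if i \<in> {1..m} then einv (gm (\<pi> j i) j) else 0)"

definition zero_beyond :: "nat \<Rightarrow> (nat \<Rightarrow> 'a \<Rightarrow> real) \<Rightarrow> nat \<Rightarrow> 'a \<Rightarrow> real" where
  "zero_beyond m v i j = (if i \<in> {1..m} then v i j else 0)"

definition ext_formulation :: "'a set \<Rightarrow> 'a set \<Rightarrow> 'a set \<Rightarrow> ('a \<Rightarrow> 'a \<Rightarrow> ereal) \<Rightarrow> ('a \<Rightarrow> nat \<Rightarrow> 'a)
    \<Rightarrow> (('a \<Rightarrow> real) \<times> (nat \<Rightarrow> 'a \<Rightarrow> real) \<times> (nat \<Rightarrow> 'a \<Rightarrow> real) \<times> ('a \<Rightarrow> real)) set" where
  "ext_formulation N J M gm \<pi> = {(x, \<theta>, v, lam).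
     x \<in> N \<rightarrow>\<^sub>E {0..} \<and>
     (\<forall>i\<in>{1..card M}. \<forall>j\<in>N - J. 0 \<le> \<theta> i j \<and> 0 \<le> v i j) \<and>
     (\<Sum>i\<in>{1..card M}. \<Sum>j\<in>N - J. \<theta> i j) + (\<Sum>j\<in>N - J. lam j) \<le> 0 \<and>
     (\<forall>j\<in>N - J. 0 \<le> lam j - zero_beyond (card M) v 1 j + x j * inv_weight gm \<pi> (card M) j 1) \<and>
     (\<forall>i\<in>{1..card M}. \<forall>j\<in>N - J. 0 \<le> \<theta> i j + zero_beyond (card M) v i j
        - zero_beyond (card M) v (i + 1) j
        + (inv_weight gm \<pi> (card M) j (i + 1) - inv_weight gm \<pi> (card M) j i) * x j) \<and>
     (\<forall>i\<in>M. 0 \<le> (\<Sum>j\<in>N - J. \<theta> (inv_into {1..card M} (\<pi> j) i) j) - x i)}"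

lemma Qk_eq_ext_formulation:
  "Qk A b B C k \<pi> = ext_formulation (- B) (Jset A b B C k) (Mset A b B C k) (gam A b B C k) \<pi>"
  unfolding Qk_def ext_formulation_def inv_weight_def zero_beyond_def Let_def ..

lemma eps_eq_min_gamma: "eps A b B C k j S = min_gamma (gam A b B C k) j S"
  unfolding eps_def min_gamma_def ..

lemma einv_nonneg: "0 < g \<Longrightarrow> 0 \<le> einv g"
  by (cases g) (auto simp: einv_def)

lemma einv_antimono: "0 < g \<Longrightarrow> g \<le> h \<Longrightarrow> einv h \<le> einv g"
  by (cases g; cases h) (auto simp: einv_def frac_le)

lemma sum_slacks_telescope:
  fixes \<theta> V G :: "nat \<Rightarrow> real"
  assumes "p \<le> Suc n"
  shows "(\<Sum>i\<in>{p..n}. \<theta> i + V i - V (Suc i) + (G (Suc i) - G i) * x)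
    = (\<Sum>i\<in>{p..n}. \<theta> i) + V p - V (Suc n) + (G (Suc n) - G p) * x"
proof -
  have "(\<Sum>i\<in>{p..n}. \<theta> i + V i - V (Suc i) + (G (Suc i) - G i) * x)
      = (\<Sum>i\<in>{p..n}. \<theta> i) - (\<Sum>i\<in>{p..n}. V (Suc i) - V i) + (\<Sum>i\<in>{p..n}. G (Suc i) - G i) * x"
    by (simp add: sum.distrib sum_subtractf sum_distrib_left sum_distrib_right algebra_simps)
  then show ?thesis
    using assms by (simp add: sum_Suc_diff)
qed

locale sorted_gammas =
  fixes N J M :: "'a set" and gm :: "'a \<Rightarrow> 'a \<Rightarrow> ereal" and \<pi> :: "'a \<Rightarrow> nat \<Rightarrow> 'a"
  assumes finite_N: "finite N" and M_subset: "M \<subseteq> N"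
    and gm_pos: "\<And>i j. i \<in> M \<Longrightarrow> j \<in> N - J \<Longrightarrow> 0 < gm i j"
    and bij_order: "\<And>j. j \<in> N - J \<Longrightarrow> bij_betw (\<pi> j) {1..card M} M"
    and sorted_order: "\<And>j p q. j \<in> N - J \<Longrightarrow> 1 \<le> p \<Longrightarrow> p \<le> q \<Longrightarrow> q \<le> card M \<Longrightarrow>
      gm (\<pi> j p) j \<le> gm (\<pi> j q) j"
begin

abbreviation g :: "'a \<Rightarrow> nat \<Rightarrow> real" where
  "g \<equiv> inv_weight gm \<pi> (card M)"

lemma g_beyond [simp]: "g j (Suc (card M)) = 0"
  by (simp add: inv_weight_def)

lemma g_antimono:
  assumes "j \<in> N - J" "1 \<le> p"
  shows "g j (Suc p) \<le> g j p"
proof (cases "p \<le> card M")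
  case True
  then have "0 < gm (\<pi> j p) j"
    using assms bij_order gm_pos by (meson atLeastAtMost_iff bij_betwE)
  moreover have "Suc p \<le> card M \<Longrightarrow> gm (\<pi> j p) j \<le> gm (\<pi> j (Suc p)) j"
    using assms by (intro sorted_order) auto
  ultimately show ?thesis
    using True assms by (auto simp: inv_weight_def einv_antimono einv_nonneg)
qed (simp add: inv_weight_def)

lemma order_position:
  assumes "j \<in> N - J" "a \<in> M"
  shows "inv_into {1..card M} (\<pi> j) a \<in> {1..card M}" "\<pi> j (inv_into {1..card M} (\<pi> j) a) = a"
proof -
  have "a \<in> \<pi> j ` {1..card M}"
    using bij_order[OF assms(1)] assms(2) by (simp add: bij_betw_def)
  then show "inv_into {1..card M} (\<pi> j) a \<in> {1..card M}"
    by (rule inv_into_into)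
  show "\<pi> j (inv_into {1..card M} (\<pi> j) a) = a"
    using \<open>a \<in> \<pi> j ` {1..card M}\<close> by (rule f_inv_into_f)
qed

definition first_pos :: "'a set \<Rightarrow> 'a \<Rightarrow> nat" where
  "first_pos S j = Min {q \<in> {1..card M}. \<pi> j q \<in> S}"

lemma first_pos_le: "q \<in> {1..card M} \<Longrightarrow> \<pi> j q \<in> S \<Longrightarrow> first_pos S j \<le> q"
  unfolding first_pos_def by (intro Min_le) auto

lemma first_pos_in:
  assumes "j \<in> N - J" "S \<subseteq> M" "S \<noteq> {}"
  shows "first_pos S j \<in> {1..card M}" "\<pi> j (first_pos S j) \<in> S"
proof -
  obtain a where "a \<in> S" using assms by blast
  then have "inv_into {1..card M} (\<pi> j) a \<in> {q \<in> {1..card M}. \<pi> j q \<in> S}"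
    using order_position[OF assms(1), of a] assms by auto
  then have "{q \<in> {1..card M}. \<pi> j q \<in> S} \<noteq> {}" by blast
  then show "first_pos S j \<in> {1..card M}" "\<pi> j (first_pos S j) \<in> S"
    using Min_in[of "{q \<in> {1..card M}. \<pi> j q \<in> S}"] unfolding first_pos_def by auto
qed

lemma min_gamma_first_pos:
  assumes j: "j \<in> N - J" and S: "S \<subseteq> M" "S \<noteq> {}"
  shows "min_gamma gm j S = gm (\<pi> j (first_pos S j)) j"
  unfolding min_gamma_def
proof (simp add: \<open>S \<noteq> {}\<close>, rule Min_eqI)
  show "finite ((\<lambda>i. gm i j) ` S)"
    using finite_subset[OF subset_trans[OF S(1) M_subset] finite_N] by simp
  show "gm (\<pi> j (first_pos S j)) j \<in> (\<lambda>i. gm i j) ` S"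
    using first_pos_in[OF assms] by blast
next
  fix y assume "y \<in> (\<lambda>i. gm i j) ` S"
  then obtain a where "a \<in> S" "y = gm a j" by blast
  define q where "q = inv_into {1..card M} (\<pi> j) a"
  have "q \<in> {1..card M}" "\<pi> j q = a"
    using order_position[OF j, of a] \<open>a \<in> S\<close> S unfolding q_def by auto
  moreover have "first_pos S j \<le> q"
    using first_pos_le calculation \<open>a \<in> S\<close> by simp
  ultimately show "gm (\<pi> j (first_pos S j)) j \<le> y"
    using sorted_order[OF j, of "first_pos S j" q] first_pos_in[OF assms] \<open>y = gm a j\<close> by auto
qed

lemma einv_min_gamma:
  assumes "j \<in> N - J" "S \<subseteq> M" "S \<noteq> {}"
  shows "einv (min_gamma gm j S) = g j (first_pos S j)"
  using min_gamma_first_pos[OF assms] first_pos_in[OF assms] by (simp add: inv_weight_def)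

lemma ext_formulation_slack_zero:
  assumes mem: "(x, \<theta>, v, lam) \<in> ext_formulation N J M gm \<pi>" and j: "j \<in> N - J"
    and i: "i \<in> {1..card M}"
  shows "\<theta> i j + zero_beyond (card M) v i j - zero_beyond (card M) v (Suc i) j
    + (g j (Suc i) - g j i) * x j = 0"
proof -
  (* The slacks of constraints 2 and 3 for fixed j telescope to lam_j + sum_i theta_ij, whose sum
     over j is nonpositive by constraint 1; being nonnegative, every slack vanishes. *)
  let ?V = "zero_beyond (card M) v"
  define e where "e i j = \<theta> i j + ?V i j - ?V (Suc i) j + (g j (Suc i) - g j i) * x j" for i j
  define e1 where "e1 j = lam j - ?V 1 j + x j * g j 1" for j
  have e1_nonneg: "\<forall>j\<in>N - J. 0 \<le> e1 j" and e_nonneg: "\<forall>j\<in>N - J. \<forall>i\<in>{1..card M}. 0 \<le> e i j"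
    and total: "(\<Sum>i\<in>{1..card M}. \<Sum>j\<in>N - J. \<theta> i j) + (\<Sum>j\<in>N - J. lam j) \<le> 0"
    using mem unfolding ext_formulation_def e_def e1_def by auto
  have "e1 j + (\<Sum>i\<in>{1..card M}. e i j) = lam j + (\<Sum>i\<in>{1..card M}. \<theta> i j)" for j
    unfolding e_def e1_def
    using sum_slacks_telescope[of 1 "card M" "\<lambda>i. \<theta> i j" "\<lambda>i. ?V i j" "\<lambda>i. g j i" "x j"]
    by (simp add: zero_beyond_def)
  then have total_le: "(\<Sum>j\<in>N - J. e1 j + (\<Sum>i\<in>{1..card M}. e i j)) \<le> 0"
    using total by (simp add: sum.distrib sum.swap[of _ "N - J"])
  have nonneg: "\<forall>j\<in>N - J. 0 \<le> e1 j + (\<Sum>i\<in>{1..card M}. e i j)"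
    using e1_nonneg e_nonneg by (auto intro!: add_nonneg_nonneg sum_nonneg)
  have "0 \<le> (\<Sum>j\<in>N - J. e1 j + (\<Sum>i\<in>{1..card M}. e i j))"
    using nonneg by (intro sum_nonneg) auto
  then have "(\<Sum>j\<in>N - J. e1 j + (\<Sum>i\<in>{1..card M}. e i j)) = 0"
    using total_le by linarith
  then have "\<forall>j\<in>N - J. e1 j + (\<Sum>i\<in>{1..card M}. e i j) = 0"
    using finite_N nonneg by (subst (asm) sum_nonneg_eq_0_iff) auto
  then have "e1 j + (\<Sum>i\<in>{1..card M}. e i j) = 0"
    using j by blast
  moreover have "0 \<le> (\<Sum>i\<in>{1..card M}. e i j)"
    using e_nonneg j by (auto intro: sum_nonneg)
  moreover have "0 \<le> e1 j"
    using e1_nonneg j by blast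
  ultimately have "(\<Sum>i\<in>{1..card M}. e i j) = 0"
    by linarith
  then have "\<forall>i\<in>{1..card M}. e i j = 0"
    using e_nonneg j by (subst (asm) sum_nonneg_eq_0_iff) auto
  then show ?thesis
    using i unfolding e_def by blast
qed

lemma ext_formulation_tail_bound:
  assumes mem: "(x, \<theta>, v, lam) \<in> ext_formulation N J M gm \<pi>" and j: "j \<in> N - J"
    and p: "p \<in> {1..card M}"
  shows "(\<Sum>i\<in>{p..card M}. \<theta> i j) \<le> g j p * x j"
proof -
  let ?V = "zero_beyond (card M) v"
  have "0 = (\<Sum>i\<in>{p..card M}. \<theta> i j + ?V i j - ?V (Suc i) j + (g j (Suc i) - g j i) * x j)"
    using ext_formulation_slack_zero[OF mem j] p by (intro sum.neutral[symmetric]) auto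
  also have "\<dots> = (\<Sum>i\<in>{p..card M}. \<theta> i j) + ?V p j - g j p * x j"
    using p sum_slacks_telescope[of p "card M" "\<lambda>i. \<theta> i j" "\<lambda>i. ?V i j" "\<lambda>i. g j i" "x j"]
    by (simp add: zero_beyond_def)
  finally have "(\<Sum>i\<in>{p..card M}. \<theta> i j) = g j p * x j - ?V p j"
    by simp
  moreover have "0 \<le> ?V p j"
    using mem j p unfolding ext_formulation_def zero_beyond_def by auto
  ultimately show ?thesis
    by linarith
qed

lemma ext_formulation_imp_ineq:
  assumes mem: "(x, \<theta>, v, lam) \<in> ext_formulation N J M gm \<pi>" and S: "S \<subseteq> M"
  shows "(\<Sum>i\<in>S. x i) - (\<Sum>j\<in>N - J. x j * einv (min_gamma gm j S)) \<le> 0"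
proof (cases "S = {}")
  case True
  then show ?thesis by (simp add: min_gamma_def einv_def)
next
  case False
  let ?p = "first_pos S"
  let ?pos = "\<lambda>j. inv_into {1..card M} (\<pi> j)"
  have "(\<Sum>i\<in>S. x i) \<le> (\<Sum>i\<in>S. \<Sum>j\<in>N - J. \<theta> (?pos j i) j)"
    using mem S unfolding ext_formulation_def by (auto intro!: sum_mono)
  also have "\<dots> = (\<Sum>j\<in>N - J. \<Sum>i\<in>S. \<theta> (?pos j i) j)"
    by (rule sum.swap)
  also have "\<dots> \<le> (\<Sum>j\<in>N - J. g j (?p j) * x j)"
  proof (rule sum_mono)
    fix j assume j: "j \<in> N - J"
    have pos: "?pos j a \<in> {1..card M}" "\<pi> j (?pos j a) = a" if "a \<in> S" for a
      using order_position[OF j] that S by auto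
    then have "inj_on (?pos j) S"
      by (metis inj_onI)
    moreover have "?pos j ` S \<subseteq> {?p j..card M}"
      using pos first_pos_le by fastforce
    ultimately have "(\<Sum>i\<in>S. \<theta> (?pos j i) j) \<le> (\<Sum>q\<in>{?p j..card M}. \<theta> q j)"
      using mem j first_pos_in[OF j S False] unfolding ext_formulation_def
      by (subst sum.reindex[symmetric, unfolded comp_def]) (auto intro!: sum_mono2)
    also have "\<dots> \<le> g j (?p j) * x j"
      using ext_formulation_tail_bound[OF mem j first_pos_in(1)[OF j S False]] .
    finally show "(\<Sum>i\<in>S. \<theta> (?pos j i) j) \<le> g j (?p j) * x j" .
  qed
  also have "\<dots> = (\<Sum>j\<in>N - J. x j * einv (min_gamma gm j S))"
    using einv_min_gamma[OF _ S False] by (simp add: mult.commute)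
  finally show ?thesis by simp
qed

definition blocks :: "('a \<times> nat) set" where
  "blocks = (N - J) \<times> {1..card M}"

definition block_supply :: "('a \<Rightarrow> real) \<Rightarrow> 'a \<times> nat \<Rightarrow> real" where
  "block_supply x = (\<lambda>(j, p). x j * (g j p - g j (Suc p)))"

definition block_reaches :: "'a \<times> nat \<Rightarrow> 'a \<Rightarrow> bool" where
  "block_reaches = (\<lambda>(j, p) a. a \<in> \<pi> j ` {1..p})"

lemma block_supply_nonneg:
  assumes "x \<in> N \<rightarrow>\<^sub>E {0..}" "b \<in> blocks"
  shows "0 \<le> block_supply x b"
  using assms g_antimono by (auto simp: blocks_def block_supply_def PiE_def Pi_def)

lemma sum_block_supply:
  assumes "p \<in> {1..card M}"
  shows "(\<Sum>q\<in>{p..card M}. block_supply x (j, q)) = x j * g j p"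
proof -
  have "(\<Sum>q\<in>{p..card M}. g j q - g j (Suc q)) = - (\<Sum>q\<in>{p..card M}. g j (Suc q) - g j q)"
    by (simp add: sum_negf[symmetric])
  also have "\<dots> = g j p"
    using assms by (simp add: sum_Suc_diff)
  finally show ?thesis
    by (simp add: block_supply_def sum_distrib_left[symmetric])
qed

lemma neighbours_blocks:
  assumes "S \<subseteq> M" "S \<noteq> {}"
  shows "neighbours blocks block_reaches S = Sigma (N - J) (\<lambda>j. {first_pos S j..card M})"
proof (intro set_eqI iffI)
  fix b assume "b \<in> neighbours blocks block_reaches S"
  then obtain j p q where b: "b = (j, p)" "j \<in> N - J" "p \<in> {1..card M}"
    and q: "q \<in> {1..p}" "\<pi> j q \<in> S"
    by (auto simp: neighbours_def blocks_def block_reaches_def)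
  then have "first_pos S j \<le> p"
    using first_pos_le[of q j S] by auto
  then show "b \<in> Sigma (N - J) (\<lambda>j. {first_pos S j..card M})"
    using b by auto
next
  fix b assume "b \<in> Sigma (N - J) (\<lambda>j. {first_pos S j..card M})"
  then obtain j p where b: "b = (j, p)" "j \<in> N - J" "p \<in> {first_pos S j..card M}"
    by auto
  have "block_reaches b (\<pi> j (first_pos S j))"
    using b first_pos_in[OF b(2) assms] unfolding block_reaches_def by auto
  moreover have "b \<in> blocks"
    using b first_pos_in[OF b(2) assms] unfolding blocks_def by auto
  ultimately show "b \<in> neighbours blocks block_reaches S"
    using first_pos_in[OF b(2) assms] unfolding neighbours_def by blast
qed

lemma hall_condition_blocks:
  assumes x: "x \<in> N \<rightarrow>\<^sub>E {0..}"
    and ineq: "\<forall>S\<subseteq>M. (\<Sum>i\<in>S. x i) - (\<Sum>j\<in>N - J. x j * einv (min_gamma gm j S)) \<le> 0"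
  shows "hall_condition blocks M (block_supply x) x block_reaches"
  unfolding hall_condition_def
proof (intro allI impI)
  fix S assume S: "S \<subseteq> M"
  show "sum x S \<le> sum (block_supply x) (neighbours blocks block_reaches S)"
  proof (cases "S = {}")
    case True
    then show ?thesis
      using block_supply_nonneg[OF x] by (auto intro: sum_nonneg simp: neighbours_def)
  next
    case False
    have "sum (block_supply x) (neighbours blocks block_reaches S)
        = (\<Sum>j\<in>N - J. \<Sum>p\<in>{first_pos S j..card M}. block_supply x (j, p))"
      unfolding neighbours_blocks[OF S False] using finite_N by (simp add: sum.Sigma)
    also have "\<dots> = (\<Sum>j\<in>N - J. x j * einv (min_gamma gm j S))"
      using first_pos_in[OF _ S False] einv_min_gamma[OF _ S False]
      by (intro sum.cong) (simp_all add: sum_block_supply)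
    finally show ?thesis
      using ineq S by simp
  qed
qed

definition flow_theta :: "('a \<times> nat \<Rightarrow> 'a \<Rightarrow> real) \<Rightarrow> nat \<Rightarrow> 'a \<Rightarrow> real" where
  "flow_theta f q j = (\<Sum>p\<in>{1..card M}. f (j, p) (\<pi> j q))"

lemma flow_theta_nonneg:
  "transport_flow blocks M (block_supply x) x block_reaches f \<Longrightarrow> 0 \<le> flow_theta f q j"
  unfolding flow_theta_def transport_flow_def by (auto intro: sum_nonneg)

lemma flow_theta_tail_bound:
  assumes f: "transport_flow blocks M (block_supply x) x block_reaches f"
    and j: "j \<in> N - J" and i: "i \<in> {1..card M}"
  shows "(\<Sum>q\<in>{i..card M}. flow_theta f q j) \<le> g j i * x j"
proof -
  have no_reach: "f (j, p) (\<pi> j q) = 0" if "p < q" "q \<in> {1..card M}" for p q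
  proof -
    have "\<not> block_reaches (j, p) (\<pi> j q)"
      using bij_order[OF j] that by (auto simp: block_reaches_def bij_betw_def inj_on_eq_iff)
    then show ?thesis
      using f unfolding transport_flow_def by blast
  qed
  have "(\<Sum>q\<in>{i..card M}. flow_theta f q j) = (\<Sum>q\<in>{i..card M}. \<Sum>p\<in>{i..card M}. f (j, p) (\<pi> j q))"
    unfolding flow_theta_def using i no_reach
    by (intro sum.cong refl sum.mono_neutral_right) auto
  also have "\<dots> \<le> (\<Sum>q\<in>{1..card M}. \<Sum>p\<in>{i..card M}. f (j, p) (\<pi> j q))"
    using i f unfolding transport_flow_def by (intro sum_mono2) (auto intro: sum_nonneg)
  also have "\<dots> = (\<Sum>p\<in>{i..card M}. sum (f (j, p)) M)"
    using sum.reindex_bij_betw[OF bij_order[OF j]] by (subst sum.swap) simp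
  also have "\<dots> \<le> (\<Sum>p\<in>{i..card M}. block_supply x (j, p))"
    using i j f unfolding transport_flow_def by (intro sum_mono) (auto simp: blocks_def)
  also have "\<dots> = g j i * x j"
    using i by (simp add: sum_block_supply)
  finally show ?thesis .
qed

lemma flow_theta_demand:
  assumes f: "transport_flow blocks M (block_supply x) x block_reaches f" and a: "a \<in> M"
  shows "(\<Sum>j\<in>N - J. flow_theta f (inv_into {1..card M} (\<pi> j) a) j) = x a"
proof -
  have "(\<Sum>j\<in>N - J. flow_theta f (inv_into {1..card M} (\<pi> j) a) j)
      = (\<Sum>j\<in>N - J. \<Sum>p\<in>{1..card M}. f (j, p) a)"
    using order_position a unfolding flow_theta_def by (intro sum.cong) simp_all
  also have "\<dots> = (\<Sum>b\<in>blocks. f b a)"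
    unfolding blocks_def by (simp add: sum.cartesian_product')
  also have "\<dots> = x a"
    using f a unfolding transport_flow_def by blast
  finally show ?thesis .
qed

lemma transport_flow_imp_ext_formulation:
  assumes f: "transport_flow blocks M (block_supply x) x block_reaches f"
    and x: "x \<in> N \<rightarrow>\<^sub>E {0..}"
  defines "v \<equiv> \<lambda>i j. g j i * x j - (\<Sum>q\<in>{i..card M}. flow_theta f q j)"
    and "lam \<equiv> \<lambda>j. - (\<Sum>q\<in>{1..card M}. flow_theta f q j)"
  shows "(x, flow_theta f, v, lam) \<in> ext_formulation N J M gm \<pi>"
proof -
  let ?T = "\<lambda>i j. \<Sum>q\<in>{i..card M}. flow_theta f q j"
  have v: "zero_beyond (card M) v i j = v i j" if "1 \<le> i" for i j
    using that by (simp add: zero_beyond_def v_def inv_weight_def)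
  have nonneg: "0 \<le> flow_theta f i j \<and> 0 \<le> v i j" if "i \<in> {1..card M}" "j \<in> N - J" for i j
    using flow_theta_nonneg[OF f] flow_theta_tail_bound[OF f that(2,1)] unfolding v_def by simp
  have "(\<Sum>j\<in>N - J. lam j) = - (\<Sum>i\<in>{1..card M}. \<Sum>j\<in>N - J. flow_theta f i j)"
    unfolding lam_def by (simp add: sum_negf sum.swap[of _ "N - J"])
  then have total: "(\<Sum>i\<in>{1..card M}. \<Sum>j\<in>N - J. flow_theta f i j) + (\<Sum>j\<in>N - J. lam j) \<le> 0"
    by simp
  have first: "0 \<le> lam j - zero_beyond (card M) v 1 j + x j * g j 1" for j
    unfolding v[OF order_refl] by (simp add: v_def lam_def)
  have slack: "0 \<le> flow_theta f i j + zero_beyond (card M) v i j - zero_beyond (card M) v (i + 1) j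
      + (g j (i + 1) - g j i) * x j" if "i \<in> {1..card M}" for i j
  proof -
    have "?T i j = flow_theta f i j + ?T (Suc i) j"
      using that by (intro sum.atLeast_Suc_atMost) auto
    moreover have "1 \<le> i" "1 \<le> i + 1"
      using that by auto
    ultimately show ?thesis
      unfolding v[OF \<open>1 \<le> i\<close>] v[OF \<open>1 \<le> i + 1\<close>] by (simp add: v_def algebra_simps)
  qed
  show ?thesis
    unfolding ext_formulation_def
    using x nonneg total first slack flow_theta_demand[OF f] by simp
qed

theorem fst_ext_formulation:
  "fst ` ext_formulation N J M gm \<pi> =
    {x \<in> N \<rightarrow>\<^sub>E {0..}. \<forall>S\<subseteq>M. (\<Sum>i\<in>S. x i) - (\<Sum>j\<in>N - J. x j * einv (min_gamma gm j S)) \<le> 0}"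
    (is "_ = {x \<in> N \<rightarrow>\<^sub>E {0..}. ?ineq x}")
proof (intro set_eqI iffI)
  fix x assume "x \<in> fst ` ext_formulation N J M gm \<pi>"
  then obtain \<theta> v lam where mem: "(x, \<theta>, v, lam) \<in> ext_formulation N J M gm \<pi>"
    by force
  then show "x \<in> {x \<in> N \<rightarrow>\<^sub>E {0..}. ?ineq x}"
    using ext_formulation_imp_ineq[OF mem] unfolding ext_formulation_def by auto
next
  fix x assume "x \<in> {x \<in> N \<rightarrow>\<^sub>E {0..}. ?ineq x}"
  then have x: "x \<in> N \<rightarrow>\<^sub>E {0..}" and ineq: "?ineq x"
    by auto
  have "finite blocks" "finite M"
    using finite_N M_subset by (auto simp: blocks_def intro: finite_subset)
  moreover have "\<forall>a\<in>M. 0 \<le> x a"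
    using x M_subset by (auto simp: PiE_def Pi_def)
  ultimately obtain f where "transport_flow blocks M (block_supply x) x block_reaches f"
    using gale_supply_demand block_supply_nonneg[OF x] hall_condition_blocks[OF x ineq] by blast
  then show "x \<in> fst ` ext_formulation N J M gm \<pi>"
    using transport_flow_imp_ext_formulation[OF _ x] by force
qed

end

theorem theorem7:
  fixes A :: "real^'n^'m" and b :: "real^'m" and B :: "'n set"
    and C :: "(real^'n) set" and k :: 'n and \<pi> :: "'n \<Rightarrow> nat \<Rightarrow> 'n"
  assumes "rank A = CARD('m)"
    and "is_feasible_basis A b B"
    and "open C" and "convex C"
    and "basic_sol A b B \<notin> closure C"
    and "recc C \<subseteq> recc (PB A b B)"
    and "k \<in> N2 A b B C"
    and "\<not> N0 A b B C \<subseteq> Jset A b B C k"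
    and "sorted_perms A b B C k \<pi>"
  shows "fst ` Qk A b B C k \<pi> =
    {x \<in> (- B) \<rightarrow>\<^sub>E {0..}. \<forall>S \<subseteq> Mset A b B C k.
        (\<Sum>i\<in>S. x i) - (\<Sum>j\<in>(- B) - Jset A b B C k. x j * einv (eps A b B C k j S)) \<le> 0}"
proof -
  interpret sorted_gammas "- B" "Jset A b B C k" "Mset A b B C k" "gam A b B C k" \<pi>
  proof
    show "finite (- B)" by simp
    show "Mset A b B C k \<subseteq> - B"
      unfolding Mset_def Jset_def by auto
    show "0 < gam A b B C k i j" if "i \<in> Mset A b B C k" "j \<in> - B - Jset A b B C k" for i j
      using that unfolding Mset_def by auto
    show "bij_betw (\<pi> j) {1..card (Mset A b B C k)} (Mset A b B C k)"
      if "j \<in> - B - Jset A b B C k" for j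
      using assms(9) that unfolding sorted_perms_def by auto
    show "gam A b B C k (\<pi> j p) j \<le> gam A b B C k (\<pi> j q) j"
      if "j \<in> - B - Jset A b B C k" "1 \<le> p" "p \<le> q" "q \<le> card (Mset A b B C k)" for j p q
      using assms(9) that unfolding sorted_perms_def by auto
  qed
  show ?thesis
    unfolding Qk_eq_ext_formulation eps_eq_min_gamma fst_ext_formulation ..
qed

end
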